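(* Let $G=(V,E)$ with colouring $f$ satisfy $|B|>|R|$. Let $G^a=(V,E^a_0)$ be obtained from $G$ by deleting all edges with both ends red, and $G^r=(V,E^r_0)$ be obtained from $G$ by adding all non-edges with both ends blue. Let $E^a$ be an optimal solution to MIAE on $(G^a,f)$ and $E^r$ an optimal solution to MIRE on $(G^r,f)$, and put $A=E^a\setminus E^a_0$ (added edges) and $D=E^r_0\setminus E^r$ (removed edges). Then $E'=(E\setminus D)\cup A$ is an optimal solution to MIE on $(G,f)$, and the optimal MIE cost on $(G,f)$ equals $|A|+|D|$.
   Context: Graphs are finite, simple and undirected; $B,R$ are the blue and red nodes under $f:V\to\{B,R\}$. A node is under (majority) illusion in $(V,E')$ if it has strictly more red than blue neighbours there. An optimal solution to MIAE on $(H=(V,F_0),f)$ is an edge set $F\supseteq F_0$ with no node under illusion in $(V,F)$ and $|F\setminus F_0|$ minimum; an optimal solution to MIRE is $F\subseteq F_0$ with no node under illusion and $|F_0\setminus F|$ minimum; an optimal solution to MIE is any edge set $F$ on $V$ with no node under illusion and $|F_0\setminus F|+|F\setminus F_0|$ minimum. *)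

theory Defs
  imports Main
begin

datatype colour = Blue | Red

definition edges_on :: "'a set \<Rightarrow> 'a set set" where
  "edges_on V = {e. e \<subseteq> V \<and> card e = 2}"

definition nbrs :: "'a set set \<Rightarrow> 'a \<Rightarrow> 'a set" where
  "nbrs E v = {u. u \<noteq> v \<and> {u, v} \<in> E}"

definition blues :: "'a set \<Rightarrow> ('a \<Rightarrow> colour) \<Rightarrow> 'a set" where
  "blues V f = {v \<in> V. f v = Blue}"

definition reds :: "'a set \<Rightarrow> ('a \<Rightarrow> colour) \<Rightarrow> 'a set" where
  "reds V f = {v \<in> V. f v = Red}"

definition under_illusion :: "('a \<Rightarrow> colour) \<Rightarrow> 'a set set \<Rightarrow> 'a \<Rightarrow> bool" where
  "under_illusion f E v \<longleftrightarrow>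
     card {u \<in> nbrs E v. f u = Blue} < card {u \<in> nbrs E v. f u = Red}"

definition no_illusion :: "'a set \<Rightarrow> ('a \<Rightarrow> colour) \<Rightarrow> 'a set set \<Rightarrow> bool" where
  "no_illusion V f E \<longleftrightarrow> (\<forall>v\<in>V. \<not> under_illusion f E v)"

definition MIAE_opt :: "'a set \<Rightarrow> ('a \<Rightarrow> colour) \<Rightarrow> 'a set set \<Rightarrow> 'a set set \<Rightarrow> bool" where
  "MIAE_opt V f F0 F \<longleftrightarrow>
     F0 \<subseteq> F \<and> F \<subseteq> edges_on V \<and> no_illusion V f F \<and>
     (\<forall>F'. F0 \<subseteq> F' \<and> F' \<subseteq> edges_on V \<and> no_illusion V f F'
           \<longrightarrow> card (F - F0) \<le> card (F' - F0))"

definition MIRE_opt :: "'a set \<Rightarrow> ('a \<Rightarrow> colour) \<Rightarrow> 'a set set \<Rightarrow> 'a set set \<Rightarrow> bool" where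
  "MIRE_opt V f F0 F \<longleftrightarrow>
     F \<subseteq> F0 \<and> no_illusion V f F \<and>
     (\<forall>F'. F' \<subseteq> F0 \<and> no_illusion V f F'
           \<longrightarrow> card (F0 - F) \<le> card (F0 - F'))"

definition mie_cost :: "'a set set \<Rightarrow> 'a set set \<Rightarrow> nat" where
  "mie_cost F0 F = card (F0 - F) + card (F - F0)"

definition MIE_opt :: "'a set \<Rightarrow> ('a \<Rightarrow> colour) \<Rightarrow> 'a set set \<Rightarrow> 'a set set \<Rightarrow> bool" where
  "MIE_opt V f F0 F \<longleftrightarrow>
     F \<subseteq> edges_on V \<and> no_illusion V f F \<and>
     (\<forall>F'. F' \<subseteq> edges_on V \<and> no_illusion V f F'
           \<longrightarrow> mie_cost F0 F \<le> mie_cost F0 F')"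

end

theory Submission
  imports Defs
begin

text \<open>
  An optimal MIAE solution never adds a red--red edge and an optimal MIRE solution never deletes a
  blue--blue edge (undoing such a change keeps every vertex free of illusion). Hence the added edges
  \<open>A\<close> avoid \<open>E\<close>, the deleted edges \<open>D\<close> lie in \<open>E\<close>, and \<open>E'\<close> agrees with \<open>E\<^sup>a\<close> around every blue
  vertex and with \<open>E\<^sup>r\<close> around every red one, so it is illusion-free at cost \<open>|A| + |D|\<close>.

  For the lower bound, split the changes of an arbitrary solution \<open>F\<close> into added blue--blue edges,
  deleted red--red edges and the rest. Add the former to \<open>E\<^sup>a\<^sub>0\<close>: at every blue vertex the surplus of
  red over blue neighbours is then at most its number of deleted edges to red vertices, and joining
  a blue vertex under illusion to a blue non-neighbour (which exists because the blue vertices are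
  the majority) uses up one such edge. This yields an MIAE solution, so \<open>|A|\<close> is at most the number
  of added blue--blue plus deleted other edges. Symmetrically, starting from \<open>E\<^sup>r\<^sub>0\<close> minus the deleted
  red--red edges and deleting red--red edges at red vertices under illusion bounds \<open>|D|\<close> by the
  deleted red--red plus added other edges.
\<close>

definition col_nbrs :: "('a \<Rightarrow> colour) \<Rightarrow> colour \<Rightarrow> 'a set set \<Rightarrow> 'a \<Rightarrow> 'a set" where
  "col_nbrs f c E v = {u \<in> nbrs E v. f u = c}"

lemma under_illusion_iff:
  "under_illusion f E v \<longleftrightarrow> card (col_nbrs f Blue E v) < card (col_nbrs f Red E v)"
  by (simp add: under_illusion_def col_nbrs_def)

lemma mem_col_nbrs_iff: "u \<in> col_nbrs f c E v \<longleftrightarrow> u \<noteq> v \<and> {u, v} \<in> E \<and> f u = c"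
  by (auto simp: col_nbrs_def nbrs_def)

lemma doubleton_mem_edges_on_iff [simp]:
  "{a, b} \<in> edges_on V \<longleftrightarrow> a \<in> V \<and> b \<in> V \<and> a \<noteq> b"
  by (cases "a = b") (auto simp: edges_on_def)

lemma edges_onE:
  assumes "e \<in> edges_on V"
  obtains a b where "e = {a, b}" "a \<noteq> b" "a \<in> V" "b \<in> V"
  using assms by (auto simp: edges_on_def card_2_iff)

lemma finite_edges_on: "finite V \<Longrightarrow> finite (edges_on V)"
  unfolding edges_on_def by (rule finite_subset[of _ "Pow V"]) auto

lemma nbrs_subset: "H \<subseteq> edges_on V \<Longrightarrow> nbrs H v \<subseteq> V"
  by (auto simp: nbrs_def)

lemma finite_col_nbrs:
  assumes "finite V" "H \<subseteq> edges_on V"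
  shows "finite (col_nbrs f c H v)"
proof (rule finite_subset[OF _ assms(1)])
  show "col_nbrs f c H v \<subseteq> V"
    using nbrs_subset[OF assms(2)] unfolding col_nbrs_def by blast
qed

lemma nbrs_insert_edge:
  "a \<noteq> b \<Longrightarrow> nbrs (insert {a, b} H) y =
     nbrs H y \<union> (if y = a then {b} else if y = b then {a} else {})"
  unfolding nbrs_def by (auto simp: doubleton_eq_iff)

lemma nbrs_remove_edge:
  "a \<noteq> b \<Longrightarrow> nbrs (H - {{a, b}}) y =
     nbrs H y - (if y = a then {b} else if y = b then {a} else {})"
  unfolding nbrs_def by (auto simp: doubleton_eq_iff)

lemma card_filter_add_card_filter_not:
  "finite S \<Longrightarrow> card {e \<in> S. p e} + card {e \<in> S. \<not> p e} = card S"
  by (subst card_Un_disjoint[symmetric]) (auto intro: arg_cong[where f = card])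

lemma not_under_illusion_mono:
  assumes "finite (col_nbrs f Blue H' v)" "finite (col_nbrs f Red H v)"
    and "col_nbrs f Blue H v \<subseteq> col_nbrs f Blue H' v"
    and "col_nbrs f Red H' v \<subseteq> col_nbrs f Red H v"
    and "\<not> under_illusion f H v"
  shows "\<not> under_illusion f H' v"
  using assms card_mono[of "col_nbrs f Blue H' v" "col_nbrs f Blue H v"]
    card_mono[of "col_nbrs f Red H v" "col_nbrs f Red H' v"]
  unfolding under_illusion_iff by linarith

lemma not_under_illusion_insert_blue_edge:
  assumes "finite V" "H \<subseteq> edges_on V" "e \<in> edges_on V" "e \<subseteq> blues V f"
    and "\<not> under_illusion f H y"
  shows "\<not> under_illusion f (insert e H) y"
proof -
  obtain a b where e: "e = {a, b}" "a \<noteq> b" using assms(3) by (rule edges_onE)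
  have "f a = Blue" "f b = Blue" using assms(4) e by (auto simp: blues_def)
  then have "col_nbrs f Blue H y \<subseteq> col_nbrs f Blue (insert e H) y"
    and "col_nbrs f Red (insert e H) y = col_nbrs f Red H y"
    using nbrs_insert_edge[OF e(2), of H y] unfolding e col_nbrs_def by auto
  moreover have "insert e H \<subseteq> edges_on V" using assms(2,3) by simp
  ultimately show ?thesis
    using not_under_illusion_mono finite_col_nbrs assms(1,2,5) by (metis order_refl)
qed

lemma not_under_illusion_remove_red_edge:
  assumes "finite V" "H \<subseteq> edges_on V" "e \<in> edges_on V" "e \<subseteq> reds V f"
    and "\<not> under_illusion f H y"
  shows "\<not> under_illusion f (H - {e}) y"
proof -
  obtain a b where e: "e = {a, b}" "a \<noteq> b" using assms(3) by (rule edges_onE)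
  have "f a = Red" "f b = Red" using assms(4) e by (auto simp: reds_def)
  then have "col_nbrs f Blue (H - {e}) y = col_nbrs f Blue H y"
    and "col_nbrs f Red (H - {e}) y \<subseteq> col_nbrs f Red H y"
    using nbrs_remove_edge[OF e(2), of H y] unfolding e col_nbrs_def by auto
  moreover have "H - {e} \<subseteq> edges_on V" using assms(2) by blast
  ultimately show ?thesis
    using not_under_illusion_mono finite_col_nbrs assms(1,2,5) by (metis order_refl)
qed

lemma blue_not_under_illusion_if_adjacent_to_all_blues:
  assumes "finite V" "card (reds V f) < card (blues V f)" "H \<subseteq> edges_on V"
    and "v \<in> V" "f v = Blue" "blues V f - {v} \<subseteq> nbrs H v"
  shows "\<not> under_illusion f H v"
proof -
  have "blues V f - {v} \<subseteq> col_nbrs f Blue H v"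
    using assms(6) by (auto simp: col_nbrs_def blues_def)
  then have "card (blues V f - {v}) \<le> card (col_nbrs f Blue H v)"
    by (rule card_mono[OF finite_col_nbrs[OF assms(1,3)]])
  moreover have "card (blues V f - {v}) = card (blues V f) - 1"
    using assms(1,4,5) by (simp add: blues_def card_Diff_singleton)
  moreover have "col_nbrs f Red H v \<subseteq> reds V f"
    using nbrs_subset[OF assms(3)] by (auto simp: col_nbrs_def reds_def)
  then have "card (col_nbrs f Red H v) \<le> card (reds V f)"
    using assms(1) by (intro card_mono) (auto simp: reds_def)
  ultimately show ?thesis
    using assms(2) unfolding under_illusion_iff by linarith
qed

definition blue_margin_covered :: "'a set \<Rightarrow> ('a \<Rightarrow> colour) \<Rightarrow> 'a set set \<Rightarrow> 'a set set \<Rightarrow> bool" where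
  "blue_margin_covered V f H P \<longleftrightarrow> (\<forall>v\<in>V. f v = Blue \<longrightarrow>
     card (col_nbrs f Red H v) \<le> card (col_nbrs f Blue H v) + card (col_nbrs f Red P v))"

definition red_margin_covered :: "'a set \<Rightarrow> ('a \<Rightarrow> colour) \<Rightarrow> 'a set set \<Rightarrow> 'a set set \<Rightarrow> bool" where
  "red_margin_covered V f H P \<longleftrightarrow> (\<forall>u\<in>V. f u = Red \<longrightarrow>
     card (col_nbrs f Red H u) \<le> card (col_nbrs f Blue H u) + card (col_nbrs f Blue P u))"

lemma blue_margin_covered_step:
  assumes V: "finite V" and "card (reds V f) < card (blues V f)"
    and P: "P \<subseteq> edges_on V" and H: "H \<subseteq> edges_on V" and cov: "blue_margin_covered V f H P"
    and v: "v \<in> V" "f v = Blue" "under_illusion f H v"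
  obtains w x where "{w, v} \<in> edges_on V" "{w, v} \<subseteq> blues V f" "{x, v} \<in> P"
    "blue_margin_covered V f (insert {w, v} H) (P - {{x, v}})"
proof -
  have budget: "card (col_nbrs f Red H y) \<le> card (col_nbrs f Blue H y) + card (col_nbrs f Red P y)"
    if "y \<in> V" "f y = Blue" for y
    using cov that unfolding blue_margin_covered_def by blast
  have "col_nbrs f Red P v \<noteq> {}"
    using budget[OF v(1,2)] v(3) unfolding under_illusion_iff by auto
  then obtain x where x_nbr: "x \<in> col_nbrs f Red P v" by blast
  then have x: "x \<noteq> v" "{x, v} \<in> P" "f x = Red" by (simp_all add: mem_col_nbrs_iff)
  obtain w where w: "w \<in> V" "f w = Blue" "w \<noteq> v" "{w, v} \<notin> H"
  proof -
    have "\<not> blues V f - {v} \<subseteq> nbrs H v"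
      using blue_not_under_illusion_if_adjacent_to_all_blues[OF assms(1,2) H v(1,2)] v(3) by blast
    then show ?thesis using that by (auto simp: blues_def nbrs_def)
  qed
  define H' where "H' = insert {w, v} H"
  have H': "H' \<subseteq> edges_on V" using H v(1) w unfolding H'_def by simp
  have nbrs_H': "nbrs H' y = nbrs H y \<union> (if y = w then {v} else if y = v then {w} else {})" for y
    unfolding H'_def using nbrs_insert_edge[OF w(3)] .
  have red_H': "col_nbrs f Red H' y = col_nbrs f Red H y" for y
    using nbrs_H'[of y] v(2) w(2) unfolding col_nbrs_def by auto
  have blue_H': "col_nbrs f Blue H y \<subseteq> col_nbrs f Blue H' y" for y
    using nbrs_H'[of y] unfolding col_nbrs_def by auto
  have "col_nbrs f Blue H' v = insert w (col_nbrs f Blue H v)" "w \<notin> col_nbrs f Blue H v"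
    using nbrs_H'[of v] w unfolding col_nbrs_def nbrs_def by auto
  then have card_blue_H'_v: "card (col_nbrs f Blue H' v) = Suc (card (col_nbrs f Blue H v))"
    using finite_col_nbrs[OF V H] by simp
  have red_P': "col_nbrs f Red (P - {{x, v}}) y = col_nbrs f Red P y - (if y = v then {x} else {})"
    if "f y = Blue" for y
    using nbrs_remove_edge[OF x(1), of P y] that x(3) unfolding col_nbrs_def by auto
  have "blue_margin_covered V f H' (P - {{x, v}})"
    unfolding blue_margin_covered_def
  proof (intro ballI impI)
    fix y assume y: "y \<in> V" "f y = Blue"
    show "card (col_nbrs f Red H' y) \<le> card (col_nbrs f Blue H' y) + card (col_nbrs f Red (P - {{x, v}}) y)"
    proof (cases "y = v")
      case True
      have "card (col_nbrs f Red (P - {{x, v}}) v) = card (col_nbrs f Red P v) - 1"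
        using red_P'[OF v(2)] x_nbr finite_col_nbrs[OF V P] by (simp add: card_Diff_singleton)
      moreover have "card (col_nbrs f Red P v) > 0"
        using x_nbr finite_col_nbrs[OF V P] card_gt_0_iff by blast
      ultimately show ?thesis
        using budget[OF v(1,2)] True red_H'[of v] card_blue_H'_v by simp
    next
      case False
      have "card (col_nbrs f Blue H y) \<le> card (col_nbrs f Blue H' y)"
        by (rule card_mono[OF finite_col_nbrs[OF V H'] blue_H'])
      then show ?thesis
        using budget[OF y] red_H'[of y] red_P'[OF y(2)] False by simp
    qed
  qed
  moreover have "{w, v} \<subseteq> blues V f" using w v by (auto simp: blues_def)
  ultimately show ?thesis
    using that[of w x] H' x(2) unfolding H'_def by blast
qed

lemma red_margin_covered_step:
  assumes V: "finite V"
    and P: "P \<subseteq> edges_on V" and H: "H \<subseteq> edges_on V" and cov: "red_margin_covered V f H P"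
    and u: "u \<in> V" "f u = Red" "under_illusion f H u"
  obtains w x where "{w, u} \<in> H" "{w, u} \<subseteq> reds V f" "{x, u} \<in> P"
    "red_margin_covered V f (H - {{w, u}}) (P - {{x, u}})"
proof -
  have budget: "card (col_nbrs f Red H y) \<le> card (col_nbrs f Blue H y) + card (col_nbrs f Blue P y)"
    if "y \<in> V" "f y = Red" for y
    using cov that unfolding red_margin_covered_def by blast
  have "col_nbrs f Blue P u \<noteq> {}"
    using budget[OF u(1,2)] u(3) unfolding under_illusion_iff by auto
  then obtain x where x_nbr: "x \<in> col_nbrs f Blue P u" by blast
  then have x: "x \<noteq> u" "{x, u} \<in> P" "f x = Blue" by (simp_all add: mem_col_nbrs_iff)
  have "col_nbrs f Red H u \<noteq> {}"
    using u(3) unfolding under_illusion_iff by auto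
  then obtain w where w_nbr: "w \<in> col_nbrs f Red H u" by blast
  then have w: "w \<noteq> u" "{w, u} \<in> H" "f w = Red" by (simp_all add: mem_col_nbrs_iff)
  define H' where "H' = H - {{w, u}}"
  have nbrs_H': "nbrs H' y = nbrs H y - (if y = w then {u} else if y = u then {w} else {})" for y
    unfolding H'_def using nbrs_remove_edge[OF w(1)] .
  have blue_H': "col_nbrs f Blue H' y = col_nbrs f Blue H y" for y
    using nbrs_H'[of y] u(2) w(3) unfolding col_nbrs_def by auto
  have red_H': "col_nbrs f Red H' y \<subseteq> col_nbrs f Red H y" for y
    using nbrs_H'[of y] unfolding col_nbrs_def by auto
  have red_H'_u: "col_nbrs f Red H' u = col_nbrs f Red H u - {w}"
    using nbrs_H'[of u] w(1) unfolding col_nbrs_def by auto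
  have blue_P': "col_nbrs f Blue (P - {{x, u}}) y = col_nbrs f Blue P y - (if y = u then {x} else {})"
    if "f y = Red" for y
    using nbrs_remove_edge[OF x(1), of P y] that x(3) unfolding col_nbrs_def by auto
  have "red_margin_covered V f H' (P - {{x, u}})"
    unfolding red_margin_covered_def
  proof (intro ballI impI)
    fix y assume y: "y \<in> V" "f y = Red"
    show "card (col_nbrs f Red H' y) \<le> card (col_nbrs f Blue H' y) + card (col_nbrs f Blue (P - {{x, u}}) y)"
    proof (cases "y = u")
      case True
      have "card (col_nbrs f Red H' u) = card (col_nbrs f Red H u) - 1"
        using red_H'_u w_nbr finite_col_nbrs[OF V H] by (simp add: card_Diff_singleton)
      moreover have "card (col_nbrs f Blue (P - {{x, u}}) u) = card (col_nbrs f Blue P u) - 1"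
        using blue_P'[OF u(2)] x_nbr finite_col_nbrs[OF V P] by (simp add: card_Diff_singleton)
      moreover have "card (col_nbrs f Blue P u) > 0"
        using x_nbr finite_col_nbrs[OF V P] card_gt_0_iff by blast
      ultimately show ?thesis
        using budget[OF u(1,2)] True blue_H'[of u] by simp
    next
      case False
      have "card (col_nbrs f Red H' y) \<le> card (col_nbrs f Red H y)"
        by (rule card_mono[OF finite_col_nbrs[OF V H] red_H'])
      then show ?thesis
        using budget[OF y] blue_H'[of y] blue_P'[OF y(2)] False by simp
    qed
  qed
  moreover have "{w, u} \<subseteq> reds V f"
    using w u H by (auto simp: reds_def)
  ultimately show ?thesis
    using that[of w x] w(2) x(2) unfolding H'_def by blast
qed

lemma no_illusion_by_adding_blue_edges:
  assumes V: "finite V" and RB: "card (reds V f) < card (blues V f)"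
    and "P \<subseteq> edges_on V" "H \<subseteq> edges_on V" "blue_margin_covered V f H P"
    and "\<forall>u\<in>V. f u = Red \<longrightarrow> \<not> under_illusion f H u"
  shows "\<exists>A \<subseteq> edges_on V. card A \<le> card P \<and> no_illusion V f (H \<union> A)"
  using assms(3-)
proof (induction "card P" arbitrary: H P rule: less_induct)
  case less
  note P = less.prems(1) and H = less.prems(2) and cov = less.prems(3) and red = less.prems(4)
  show ?case
  proof (cases "no_illusion V f H")
    case True
    then show ?thesis by (intro exI[of _ "{}"]) auto
  next
    case False
    then obtain v where v: "v \<in> V" "under_illusion f H v"
      unfolding no_illusion_def by blast
    have "f v = Blue" using red v by (cases "f v") auto
    then obtain w x where e: "{w, v} \<in> edges_on V" "{w, v} \<subseteq> blues V f" and x: "{x, v} \<in> P"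
      and cov': "blue_margin_covered V f (insert {w, v} H) (P - {{x, v}})"
      using blue_margin_covered_step[OF V RB P H cov v(1) _ v(2)] by blast
    have finite_P: "finite P" using finite_subset[OF P finite_edges_on[OF V]] .
    have "\<forall>u\<in>V. f u = Red \<longrightarrow> \<not> under_illusion f (insert {w, v} H) u"
      using red not_under_illusion_insert_blue_edge[OF V H e] by blast
    moreover have "card (P - {{x, v}}) < card P" using card_Diff1_less[OF finite_P x] .
    ultimately obtain A where A: "A \<subseteq> edges_on V" "card A \<le> card (P - {{x, v}})"
        "no_illusion V f (insert {w, v} H \<union> A)"
      using less.hyps[OF _ _ _ cov'] P H e(1) by blast
    have "card (insert {w, v} A) \<le> Suc (card (P - {{x, v}}))"
      using A(2) finite_subset[OF A(1) finite_edges_on[OF V]] by (simp add: card_insert_if)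
    also have "\<dots> = card P" using card_Suc_Diff1[OF finite_P x] .
    finally show ?thesis
      using A(1,3) e(1) by (intro exI[of _ "insert {w, v} A"]) auto
  qed
qed

lemma no_illusion_by_removing_red_edges:
  assumes V: "finite V"
    and "P \<subseteq> edges_on V" "H \<subseteq> edges_on V" "red_margin_covered V f H P"
    and "\<forall>v\<in>V. f v = Blue \<longrightarrow> \<not> under_illusion f H v"
  shows "\<exists>D \<subseteq> H. card D \<le> card P \<and> no_illusion V f (H - D)"
  using assms(2-)
proof (induction "card P" arbitrary: H P rule: less_induct)
  case less
  note P = less.prems(1) and H = less.prems(2) and cov = less.prems(3) and blue = less.prems(4)
  show ?case
  proof (cases "no_illusion V f H")
    case True
    then show ?thesis by (intro exI[of _ "{}"]) auto
  next
    case False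
    then obtain u where u: "u \<in> V" "under_illusion f H u"
      unfolding no_illusion_def by blast
    have "f u = Red" using blue u by (cases "f u") auto
    then obtain w x where e: "{w, u} \<in> H" "{w, u} \<subseteq> reds V f" and x: "{x, u} \<in> P"
      and cov': "red_margin_covered V f (H - {{w, u}}) (P - {{x, u}})"
      using red_margin_covered_step[OF V P H cov u(1) _ u(2)] by blast
    have finite_P: "finite P" using finite_subset[OF P finite_edges_on[OF V]] .
    have "\<forall>v\<in>V. f v = Blue \<longrightarrow> \<not> under_illusion f (H - {{w, u}}) v"
      using blue not_under_illusion_remove_red_edge[OF V H subsetD[OF H e(1)] e(2)] by blast
    moreover have "card (P - {{x, u}}) < card P" using card_Diff1_less[OF finite_P x] .
    ultimately obtain D where D: "D \<subseteq> H - {{w, u}}" "card D \<le> card (P - {{x, u}})"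
        "no_illusion V f (H - {{w, u}} - D)"
      using less.hyps[OF _ _ _ cov'] P H by blast
    have "card (insert {w, u} D) \<le> Suc (card (P - {{x, u}}))"
    proof -
      have "finite D" using D(1) H finite_subset[OF _ finite_edges_on[OF V]] by blast
      then show ?thesis using D(2) by (simp add: card_insert_if)
    qed
    also have "\<dots> = card P" using card_Suc_Diff1[OF finite_P x] .
    moreover have "H - insert {w, u} D = H - {{w, u}} - D" by blast
    ultimately show ?thesis
      using D(1,3) e(1) by (intro exI[of _ "insert {w, u} D"]) auto
  qed
qed

lemma MIAE_opt_added_edge_not_red:
  assumes "finite V" "MIAE_opt V f F0 F" "e \<in> F - F0"
  shows "\<not> e \<subseteq> reds V f"
proof
  assume red: "e \<subseteq> reds V f"
  have F: "F0 \<subseteq> F" "F \<subseteq> edges_on V" "no_illusion V f F"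
    and opt: "\<And>F'. F0 \<subseteq> F' \<Longrightarrow> F' \<subseteq> edges_on V \<Longrightarrow> no_illusion V f F' \<Longrightarrow>
                card (F - F0) \<le> card (F' - F0)"
    using assms(2) unfolding MIAE_opt_def by auto
  have "e \<in> edges_on V" using F(2) assms(3) by blast
  then have "no_illusion V f (F - {e})"
    using F(3) not_under_illusion_remove_red_edge[OF assms(1) F(2) _ red]
    unfolding no_illusion_def by blast
  moreover have "F0 \<subseteq> F - {e}" using F(1) assms(3) by blast
  moreover have "F - {e} \<subseteq> edges_on V" using F(2) by blast
  ultimately have "card (F - F0) \<le> card (F - {e} - F0)"
    using opt by blast
  also have "F - {e} - F0 = F - F0 - {e}" by blast
  finally have "card (F - F0) \<le> card (F - F0 - {e})" .
  moreover have "finite (F - F0)"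
    using finite_subset[OF F(2) finite_edges_on[OF assms(1)]] by simp
  ultimately show False
    using card_Diff1_less[OF _ assms(3)] by simp
qed

lemma MIRE_opt_removed_edge_not_blue:
  assumes "finite V" "F0 \<subseteq> edges_on V" "MIRE_opt V f F0 F" "e \<in> F0 - F"
  shows "\<not> e \<subseteq> blues V f"
proof
  assume blue: "e \<subseteq> blues V f"
  have F: "F \<subseteq> F0" "no_illusion V f F"
    and opt: "\<And>F'. F' \<subseteq> F0 \<Longrightarrow> no_illusion V f F' \<Longrightarrow> card (F0 - F) \<le> card (F0 - F')"
    using assms(3) unfolding MIRE_opt_def by auto
  have "e \<in> edges_on V" using assms(2,4) by blast
  then have "no_illusion V f (insert e F)"
    using F(2) not_under_illusion_insert_blue_edge[OF assms(1) order_trans[OF F(1) assms(2)] _ blue]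
    unfolding no_illusion_def by blast
  moreover have "insert e F \<subseteq> F0" using F(1) assms(4) by blast
  ultimately have "card (F0 - F) \<le> card (F0 - insert e F)"
    using opt by blast
  also have "F0 - insert e F = F0 - F - {e}" by blast
  finally have "card (F0 - F) \<le> card (F0 - F - {e})" .
  moreover have "finite (F0 - F)"
    using finite_subset[OF assms(2) finite_edges_on[OF assms(1)]] by simp
  ultimately show False
    using card_Diff1_less[OF _ assms(4)] by simp
qed

lemma MIAE_opt_cost_le:
  assumes V: "finite V" and RB: "card (reds V f) < card (blues V f)" and E: "E \<subseteq> edges_on V"
    and Ea0_def: "Ea0 = E - {e. e \<subseteq> reds V f}" and opt: "MIAE_opt V f Ea0 Ea"
    and F: "F \<subseteq> edges_on V" "no_illusion V f F"
  shows "card (Ea - Ea0) \<le> card {e \<in> F - E. e \<subseteq> blues V f} + card {e \<in> E - F. \<not> e \<subseteq> reds V f}"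
proof -
  define B where "B = {e \<in> F - E. e \<subseteq> blues V f}"
  define P where "P = {e \<in> E - F. \<not> e \<subseteq> reds V f}"
  define H where "H = Ea0 \<union> B"
  have H: "H \<subseteq> edges_on V" using E F(1) unfolding H_def Ea0_def B_def by blast
  have P: "P \<subseteq> edges_on V" using E unfolding P_def by blast
  have "blue_margin_covered V f H P"
    unfolding blue_margin_covered_def
  proof (intro ballI impI)
    fix v assume v: "v \<in> V" "f v = Blue"
    have "card (col_nbrs f Red H v) \<le> card (col_nbrs f Red F v \<union> col_nbrs f Red P v)"
    proof (rule card_mono)
      show "finite (col_nbrs f Red F v \<union> col_nbrs f Red P v)"
        using finite_col_nbrs[OF V F(1)] finite_col_nbrs[OF V P] by blast
      show "col_nbrs f Red H v \<subseteq> col_nbrs f Red F v \<union> col_nbrs f Red P v"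
        using v(2) by (auto simp: mem_col_nbrs_iff H_def Ea0_def B_def P_def blues_def reds_def)
    qed
    also have "\<dots> \<le> card (col_nbrs f Red F v) + card (col_nbrs f Red P v)"
      by (rule card_Un_le)
    also have "\<dots> \<le> card (col_nbrs f Blue F v) + card (col_nbrs f Red P v)"
      using F(2) v(1) unfolding no_illusion_def under_illusion_iff by (auto simp: not_less)
    also have "\<dots> \<le> card (col_nbrs f Blue H v) + card (col_nbrs f Red P v)"
    proof -
      have "col_nbrs f Blue F v \<subseteq> col_nbrs f Blue H v"
        using v F(1) by (auto simp: mem_col_nbrs_iff H_def Ea0_def B_def blues_def reds_def)
      then show ?thesis using card_mono[OF finite_col_nbrs[OF V H]] by simp
    qed
    finally show "card (col_nbrs f Red H v) \<le> card (col_nbrs f Blue H v) + card (col_nbrs f Red P v)" .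
  qed
  moreover have "\<forall>u\<in>V. f u = Red \<longrightarrow> \<not> under_illusion f H u"
  proof (intro ballI impI)
    fix u assume "u \<in> V" "f u = Red"
    then have "col_nbrs f Red H u = {}"
      using H by (auto simp: mem_col_nbrs_iff H_def Ea0_def B_def blues_def reds_def)
    then show "\<not> under_illusion f H u" unfolding under_illusion_iff by simp
  qed
  ultimately obtain A where A: "A \<subseteq> edges_on V" "card A \<le> card P" "no_illusion V f (H \<union> A)"
    using no_illusion_by_adding_blue_edges[OF V RB P H] by blast
  have "Ea0 \<subseteq> H \<union> A" "H \<union> A \<subseteq> edges_on V"
    using H A(1) unfolding H_def by auto
  then have "card (Ea - Ea0) \<le> card (H \<union> A - Ea0)"
    using opt A(3) unfolding MIAE_opt_def by auto
  also have "\<dots> \<le> card (B \<union> A)"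
  proof (rule card_mono)
    show "finite (B \<union> A)"
      using finite_subset[OF F(1) finite_edges_on[OF V]] finite_subset[OF A(1) finite_edges_on[OF V]]
      unfolding B_def by simp
    show "H \<union> A - Ea0 \<subseteq> B \<union> A" unfolding H_def by blast
  qed
  also have "\<dots> \<le> card B + card A" by (rule card_Un_le)
  finally show ?thesis using A(2) unfolding B_def P_def by linarith
qed

lemma MIRE_opt_cost_le:
  assumes V: "finite V" and RB: "card (reds V f) < card (blues V f)" and E: "E \<subseteq> edges_on V"
    and Er0_def: "Er0 = E \<union> {e \<in> edges_on V. e \<subseteq> blues V f}" and opt: "MIRE_opt V f Er0 Er"
    and F: "F \<subseteq> edges_on V" "no_illusion V f F"
  shows "card (Er0 - Er) \<le> card {e \<in> E - F. e \<subseteq> reds V f} + card {e \<in> F - E. \<not> e \<subseteq> blues V f}"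
proof -
  define R where "R = {e \<in> E - F. e \<subseteq> reds V f}"
  define P where "P = {e \<in> F - E. \<not> e \<subseteq> blues V f}"
  define H where "H = Er0 - R"
  have H: "H \<subseteq> edges_on V" using E unfolding H_def Er0_def by blast
  have P: "P \<subseteq> edges_on V" using F(1) unfolding P_def by blast
  have "red_margin_covered V f H P"
    unfolding red_margin_covered_def
  proof (intro ballI impI)
    fix u assume u: "u \<in> V" "f u = Red"
    have "col_nbrs f Red H u \<subseteq> col_nbrs f Red F u"
      using u H by (auto simp: mem_col_nbrs_iff H_def Er0_def R_def blues_def reds_def)
    then have "card (col_nbrs f Red H u) \<le> card (col_nbrs f Red F u)"
      by (rule card_mono[OF finite_col_nbrs[OF V F(1)]])
    also have "\<dots> \<le> card (col_nbrs f Blue F u)"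
      using F(2) u(1) unfolding no_illusion_def under_illusion_iff by (auto simp: not_less)
    also have "\<dots> \<le> card (col_nbrs f Blue H u \<union> col_nbrs f Blue P u)"
    proof (rule card_mono)
      show "finite (col_nbrs f Blue H u \<union> col_nbrs f Blue P u)"
        using finite_col_nbrs[OF V H] finite_col_nbrs[OF V P] by blast
      show "col_nbrs f Blue F u \<subseteq> col_nbrs f Blue H u \<union> col_nbrs f Blue P u"
        using u(2) by (auto simp: mem_col_nbrs_iff H_def Er0_def R_def P_def blues_def reds_def)
    qed
    also have "\<dots> \<le> card (col_nbrs f Blue H u) + card (col_nbrs f Blue P u)"
      by (rule card_Un_le)
    finally show "card (col_nbrs f Red H u) \<le> card (col_nbrs f Blue H u) + card (col_nbrs f Blue P u)" .
  qed
  moreover have "\<forall>v\<in>V. f v = Blue \<longrightarrow> \<not> under_illusion f H v"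
  proof (intro ballI impI)
    fix v assume v: "v \<in> V" "f v = Blue"
    show "\<not> under_illusion f H v"
    proof (rule blue_not_under_illusion_if_adjacent_to_all_blues[OF V RB H v])
      show "blues V f - {v} \<subseteq> nbrs H v"
        using v by (auto simp: nbrs_def H_def Er0_def R_def blues_def reds_def)
    qed
  qed
  ultimately obtain D where D: "D \<subseteq> H" "card D \<le> card P" "no_illusion V f (H - D)"
    using no_illusion_by_removing_red_edges[OF V P H] by blast
  have "H - D \<subseteq> Er0" unfolding H_def by blast
  then have "card (Er0 - Er) \<le> card (Er0 - (H - D))"
    using opt D(3) unfolding MIRE_opt_def by auto
  also have "\<dots> \<le> card (R \<union> D)"
  proof (rule card_mono)
    show "finite (R \<union> D)"
      using finite_subset[OF E finite_edges_on[OF V]] finite_subset[OF order_trans[OF D(1) H]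
          finite_edges_on[OF V]]
      unfolding R_def by simp
    show "Er0 - (H - D) \<subseteq> R \<union> D" unfolding H_def by blast
  qed
  also have "\<dots> \<le> card R + card D" by (rule card_Un_le)
  finally show ?thesis using D(2) unfolding R_def P_def by linarith
qed

lemma no_illusion_glue:
  assumes V: "finite V" and E': "E' \<subseteq> edges_on V"
    and Ea: "Ea \<subseteq> edges_on V" "no_illusion V f Ea"
    and Er: "Er \<subseteq> edges_on V" "no_illusion V f Er"
    and "{e \<in> Ea. e \<subseteq> blues V f} \<subseteq> E'" "{e \<in> E'. \<not> e \<subseteq> reds V f} \<subseteq> Ea"
    and "{e \<in> Er. \<not> e \<subseteq> blues V f} \<subseteq> E'" "{e \<in> E'. e \<subseteq> reds V f} \<subseteq> Er"
  shows "no_illusion V f E'"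
  unfolding no_illusion_def
proof
  fix v assume v: "v \<in> V"
  show "\<not> under_illusion f E' v"
  proof (cases "f v")
    case Blue
    show ?thesis
    proof (rule not_under_illusion_mono[OF finite_col_nbrs[OF V E'] finite_col_nbrs[OF V Ea(1)]])
      show "col_nbrs f Blue Ea v \<subseteq> col_nbrs f Blue E' v"
      proof
        fix u assume u: "u \<in> col_nbrs f Blue Ea v"
        then have "{u, v} \<in> edges_on V" using Ea(1) by (auto simp: mem_col_nbrs_iff)
        then show "u \<in> col_nbrs f Blue E' v"
          using u Blue assms(7) by (auto simp: mem_col_nbrs_iff blues_def)
      qed
      show "col_nbrs f Red E' v \<subseteq> col_nbrs f Red Ea v"
        using Blue assms(8) by (auto simp: mem_col_nbrs_iff reds_def)
      show "\<not> under_illusion f Ea v" using Ea(2) v unfolding no_illusion_def by blast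
    qed
  next
    case Red
    show ?thesis
    proof (rule not_under_illusion_mono[OF finite_col_nbrs[OF V E'] finite_col_nbrs[OF V Er(1)]])
      show "col_nbrs f Blue Er v \<subseteq> col_nbrs f Blue E' v"
        using Red assms(9) by (auto simp: mem_col_nbrs_iff blues_def)
      show "col_nbrs f Red E' v \<subseteq> col_nbrs f Red Er v"
      proof
        fix u assume u: "u \<in> col_nbrs f Red E' v"
        then have "{u, v} \<in> edges_on V" using E' by (auto simp: mem_col_nbrs_iff)
        then show "u \<in> col_nbrs f Red Er v"
          using u Red assms(10) by (auto simp: mem_col_nbrs_iff reds_def)
      qed
      show "\<not> under_illusion f Er v" using Er(2) v unfolding no_illusion_def by blast
    qed
  qed
qed

lemma MIAE_MIRE_combination:
  assumes V: "finite V" and E: "E \<subseteq> edges_on V"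
    and Ea0: "Ea0 = E - {e. e \<subseteq> reds V f}" and Er0: "Er0 = E \<union> {e \<in> edges_on V. e \<subseteq> blues V f}"
    and opt_a: "MIAE_opt V f Ea0 Ea" and opt_r: "MIRE_opt V f Er0 Er"
  defines "E' \<equiv> (E - (Er0 - Er)) \<union> (Ea - Ea0)"
  shows "E' \<subseteq> edges_on V" "no_illusion V f E'"
    and "mie_cost E E' = card (Ea - Ea0) + card (Er0 - Er)"
proof -
  have Ea: "Ea0 \<subseteq> Ea" "Ea \<subseteq> edges_on V" "no_illusion V f Ea"
    using opt_a unfolding MIAE_opt_def by auto
  have Er: "Er \<subseteq> Er0" "no_illusion V f Er"
    using opt_r unfolding MIRE_opt_def by auto
  have Er0_edges: "Er0 \<subseteq> edges_on V" using E Er0 by blast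
  have added_not_red: "\<not> e \<subseteq> reds V f" if "e \<in> Ea - Ea0" for e
    using MIAE_opt_added_edge_not_red[OF V opt_a that] .
  have removed_not_blue: "\<not> e \<subseteq> blues V f" if "e \<in> Er0 - Er" for e
    using MIRE_opt_removed_edge_not_blue[OF V Er0_edges opt_r that] .
  show E': "E' \<subseteq> edges_on V" using E Ea(2) unfolding E'_def by blast
  show "no_illusion V f E'"
  proof (rule no_illusion_glue[OF V E' Ea(2,3) order_trans[OF Er(1) Er0_edges] Er(2)])
    show "{e \<in> Ea. e \<subseteq> blues V f} \<subseteq> E'"
      using removed_not_blue unfolding E'_def Ea0 by blast
    show "{e \<in> E'. \<not> e \<subseteq> reds V f} \<subseteq> Ea"
      using Ea(1) unfolding E'_def Ea0 by blast
    show "{e \<in> Er. \<not> e \<subseteq> blues V f} \<subseteq> E'"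
      using Er(1) unfolding E'_def Er0 by blast
    show "{e \<in> E'. e \<subseteq> reds V f} \<subseteq> Er"
      using added_not_red Er0 unfolding E'_def by blast
  qed
  have "E - E' = Er0 - Er" "E' - E = Ea - Ea0"
    using added_not_red removed_not_blue unfolding E'_def Ea0 Er0 by auto
  then show "mie_cost E E' = card (Ea - Ea0) + card (Er0 - Er)"
    unfolding mie_cost_def by simp
qed

lemma mie_cost_lower_bound:
  assumes V: "finite V" and E: "E \<subseteq> edges_on V" and RB: "card (reds V f) < card (blues V f)"
    and Ea0: "Ea0 = E - {e. e \<subseteq> reds V f}" and Er0: "Er0 = E \<union> {e \<in> edges_on V. e \<subseteq> blues V f}"
    and opt_a: "MIAE_opt V f Ea0 Ea" and opt_r: "MIRE_opt V f Er0 Er"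
    and F: "F \<subseteq> edges_on V" "no_illusion V f F"
  shows "card (Ea - Ea0) + card (Er0 - Er) \<le> mie_cost E F"
proof -
  have finite: "finite (F - E)" "finite (E - F)"
    using E F(1) finite_subset finite_edges_on[OF V] by blast+
  show ?thesis
    using MIAE_opt_cost_le[OF V RB E Ea0 opt_a F] MIRE_opt_cost_le[OF V RB E Er0 opt_r F]
      card_filter_add_card_filter_not[OF finite(1), of "\<lambda>e. e \<subseteq> blues V f"]
      card_filter_add_card_filter_not[OF finite(2), of "\<lambda>e. e \<subseteq> reds V f"]
    unfolding mie_cost_def by linarith
qed

theorem mainTheorem12:
  fixes V :: "'a set" and f :: "'a \<Rightarrow> colour" and E Ea0 Er0 Ea Er :: "'a set set"
  assumes "finite V"
    and "E \<subseteq> edges_on V"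
    and "card (reds V f) < card (blues V f)"
    and "Ea0 = E - {e. e \<subseteq> reds V f}"
    and "Er0 = E \<union> {e \<in> edges_on V. e \<subseteq> blues V f}"
    and "MIAE_opt V f Ea0 Ea"
    and "MIRE_opt V f Er0 Er"
  shows "MIE_opt V f E ((E - (Er0 - Er)) \<union> (Ea - Ea0))
       \<and> mie_cost E ((E - (Er0 - Er)) \<union> (Ea - Ea0)) = card (Ea - Ea0) + card (Er0 - Er)"
proof -
  let ?E' = "(E - (Er0 - Er)) \<union> (Ea - Ea0)"
  have feasible: "?E' \<subseteq> edges_on V" "no_illusion V f ?E'"
    and cost: "mie_cost E ?E' = card (Ea - Ea0) + card (Er0 - Er)"
    using MIAE_MIRE_combination[OF assms(1,2,4-7)] by blast+
  have "mie_cost E ?E' \<le> mie_cost E F" if "F \<subseteq> edges_on V" "no_illusion V f F" for F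
    using mie_cost_lower_bound[OF assms that] unfolding cost .
  then show ?thesis
    using feasible cost unfolding MIE_opt_def by blast
qed

end
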